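(* There exists a sequence of graphs $(G_n)$, defined for all sufficiently large $n$, with the following property. For all constants $\delta>0$ and $\gamma>0$: if $\mathcal C_n$ is any non-overlapping clustering of $G_n$ in which every cluster induces a subgraph of density at least $\delta$, then the fraction of maximal cliques $D$ of $G_n$ for which there is a cluster $C\in\mathcal C_n$ with $|C\cap D|\ge\gamma|D|$ tends to $0$ as $n\to\infty$.
   Context: A cluster of a graph is a nonempty vertex subset; a non-overlapping clustering is a collection of clusters in which each vertex lies in exactly one cluster. For a graph with $n'\ge 2$ vertices and $m'$ edges its density is $m'/\binom{n'}{2}$; a one-vertex graph has density $1$. A clustering partially covers a clique $D$ if some cluster contains a constant fraction of the vertices of $D$. *)

theory Defs
  imports Complex_Main
begin

text \<open>A finite simple graph on natural-number vertices: a vertex set and a set of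
  2-element edges contained in it.\<close>
type_synonym graph = "nat set \<times> nat set set"

definition verts :: "graph \<Rightarrow> nat set" where "verts G = fst G"
definition edges :: "graph \<Rightarrow> nat set set" where "edges G = snd G"

definition simple_graph :: "graph \<Rightarrow> bool" where
  "simple_graph G \<longleftrightarrow> finite (verts G) \<and>
     (\<forall>e\<in>edges G. \<exists>u v. u \<noteq> v \<and> e = {u, v} \<and> u \<in> verts G \<and> v \<in> verts G)"

definition is_clique :: "graph \<Rightarrow> nat set \<Rightarrow> bool" where
  "is_clique G D \<longleftrightarrow> D \<subseteq> verts G \<and> (\<forall>u\<in>D. \<forall>v\<in>D. u \<noteq> v \<longrightarrow> {u, v} \<in> edges G)"

definition maximal_clique :: "graph \<Rightarrow> nat set \<Rightarrow> bool" where
  "maximal_clique G D \<longleftrightarrow> is_clique G D \<and> (\<forall>D'. is_clique G D' \<and> D \<subseteq> D' \<longrightarrow> D' = D)"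

definition maximal_cliques :: "graph \<Rightarrow> nat set set" where
  "maximal_cliques G = {D. maximal_clique G D}"

definition clustering :: "graph \<Rightarrow> nat set set \<Rightarrow> bool" where
  "clustering G \<C> \<longleftrightarrow> (\<forall>C\<in>\<C>. C \<noteq> {} \<and> C \<subseteq> verts G) \<and>
     (\<forall>v\<in>verts G. \<exists>!C. C \<in> \<C> \<and> v \<in> C)"

definition induced_density :: "graph \<Rightarrow> nat set \<Rightarrow> real" where
  "induced_density G C =
     (if card C \<le> 1 then 1
      else real (card {e \<in> edges G. e \<subseteq> C}) / real (card C choose 2))"

definition covered_fraction :: "graph \<Rightarrow> nat set set \<Rightarrow> real \<Rightarrow> real" where
  "covered_fraction G \<C> \<gamma> =
     real (card {D \<in> maximal_cliques G. \<exists>C\<in>\<C>. real (card (C \<inter> D)) \<ge> \<gamma> * real (card D)})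
     / real (card (maximal_cliques G))"

end

theory Submission
  imports Defs "HOL-Library.Countable" "HOL-Real_Asymp.Real_Asymp"
begin

(* The graphs are the Hamming graphs H(n, n^2): words of length n over n^2 letters, adjacent
   when they differ in exactly one position.  Their maximal cliques are the lines (vary one
   position), of n^2 vertices each; two lines meet in at most one vertex, every vertex lies on
   n lines and has fewer than n^3 neighbours.

   A cluster of density at least delta therefore has at most 1 + 2 n^3 / delta vertices.  By
   inclusion-exclusion, c vertices meeting m lines in at least g vertices each satisfy
   c >= m g - m (m - 1) / 2; as c is far below g^2 / 2 for g = gamma n^2, such a cluster covers
   at most 2 c / g lines.  Summing over the clusters, at most 2 |V| / (gamma n^2) of the
   |V| / n lines are covered: a fraction 2 / (gamma n). *)

definition neighbours :: "graph \<Rightarrow> nat \<Rightarrow> nat set" where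
  "neighbours G u = {w. {u, w} \<in> edges G}"

lemma finite_verts: "simple_graph G \<Longrightarrow> finite (verts G)"
  unfolding simple_graph_def by blast

lemma neighbours_subset_verts:
  assumes "simple_graph G"
  shows "neighbours G u \<subseteq> verts G"
proof
  fix w assume "w \<in> neighbours G u"
  then obtain a b where "{u, w} = {a, b}" "a \<in> verts G" "b \<in> verts G"
    using assms unfolding simple_graph_def neighbours_def by blast
  then show "w \<in> verts G" by (auto simp: doubleton_eq_iff)
qed

lemma maximal_cliques_subset_verts: "D \<in> maximal_cliques G \<Longrightarrow> D \<subseteq> verts G"
  by (simp add: maximal_cliques_def maximal_clique_def is_clique_def)

lemma finite_maximal_cliques: "simple_graph G \<Longrightarrow> finite (maximal_cliques G)"
  using maximal_cliques_subset_verts finite_verts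
  by (metis Pow_iff finite_Pow_iff finite_subset subsetI)

lemma card_UN_ge_pairwise_Int_le_1:
  fixes A :: "'b \<Rightarrow> 'a set" and g :: real
  assumes "finite F"
    and "\<And>D. D \<in> F \<Longrightarrow> finite (A D)"
    and "\<And>D. D \<in> F \<Longrightarrow> g \<le> card (A D)"
    and "\<And>D D'. D \<in> F \<Longrightarrow> D' \<in> F \<Longrightarrow> D \<noteq> D' \<Longrightarrow> card (A D \<inter> A D') \<le> 1"
  shows "real (card F) * g - real (card F) * (real (card F) - 1) / 2 \<le> card (\<Union>D\<in>F. A D)"
  using assms
proof (induction F rule: finite_induct)
  case empty
  then show ?case by simp
next
  case (insert D F)
  let ?U = "\<Union>D\<in>F. A D"
  have IH: "real (card F) * g - real (card F) * (real (card F) - 1) / 2 \<le> card ?U"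
    using insert.IH insert.prems by (metis insert_iff)
  have "card (A D \<inter> ?U) \<le> (\<Sum>D'\<in>F. card (A D \<inter> A D'))"
    unfolding Int_UN_distrib using insert.hyps(1) by (rule card_UN_le)
  also have "\<dots> \<le> (\<Sum>D'\<in>F. 1)"
    using insert.prems(3) insert.hyps(2) by (intro sum_mono) (metis insertCI)
  finally have overlap: "card (A D \<inter> ?U) \<le> card F" by simp
  have "card (A D \<union> ?U) + card (A D \<inter> ?U) = card (A D) + card ?U"
    using insert.prems(1) insert.hyps(1) by (intro card_Un_Int[symmetric]) auto
  moreover have "g \<le> card (A D)"
    using insert.prems(2) by simp
  moreover have "real (card (insert D F)) * g - real (card (insert D F)) * (real (card (insert D F)) - 1) / 2
      = g + (real (card F) * g - real (card F) * (real (card F) - 1) / 2) - card F"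
    using insert.hyps by (simp add: field_simps)
  ultimately show ?case
    using IH overlap by simp
qed

lemma card_family_large_traces_le:
  fixes g :: real
  assumes "finite C" "finite F" "g > 0"
    and traces: "\<And>D. D \<in> F \<Longrightarrow> g \<le> card (C \<inter> D)"
    and pairwise: "\<And>D D'. D \<in> F \<Longrightarrow> D' \<in> F \<Longrightarrow> D \<noteq> D' \<Longrightarrow> card (D \<inter> D') \<le> 1"
    and members: "\<And>D. D \<in> F \<Longrightarrow> finite D"
    and small: "card C < (g - 1) * g / 2"
  shows "card F * g \<le> 2 * real (card C)"
proof -
  have subfamily: "card F' * g \<le> 2 * real (card C)" if "F' \<subseteq> F" "card F' \<le> g" for F'
  proof -
    have "real (card F') * g - real (card F') * (real (card F') - 1) / 2 \<le> card (\<Union>D\<in>F'. C \<inter> D)"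
    proof (rule card_UN_ge_pairwise_Int_le_1)
      show "card ((C \<inter> D) \<inter> (C \<inter> D')) \<le> 1" if "D \<in> F'" "D' \<in> F'" "D \<noteq> D'" for D D'
        using pairwise[of D D'] members[of D] card_mono[of "D \<inter> D'" "(C \<inter> D) \<inter> (C \<inter> D')"]
          that \<open>F' \<subseteq> F\<close> by force
    qed (use that assms(1,2) finite_subset traces in auto)
    also have "\<dots> \<le> card C"
      using assms(1) by (auto intro!: card_mono)
    finally have "real (card F') * g - real (card F') * (real (card F') - 1) / 2 \<le> card C" .
    moreover have "real (card F') * (real (card F') - 1) \<le> card F' * g"
      using that(2) by (intro mult_left_mono) auto
    ultimately show ?thesis by linarith
  qed
  \<comment> \<open>Otherwise already \<open>\<lfloor>g\<rfloor>\<close> members of \<open>F\<close> would need more than \<open>card C\<close> points.\<close>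
  have "card F \<le> g"
  proof (rule ccontr)
    assume "\<not> card F \<le> g"
    define m where "m = nat \<lfloor>g\<rfloor>"
    have m: "m \<le> g" "g - 1 < m"
      using \<open>g > 0\<close> unfolding m_def by linarith+
    have "real m < card F"
      using m \<open>\<not> card F \<le> g\<close> by linarith
    then obtain F' where "F' \<subseteq> F" "card F' = m"
      by (metis less_imp_le of_nat_less_iff obtain_subset_with_card_n)
    then have "m * g \<le> 2 * real (card C)"
      using subfamily[of F'] m by simp
    moreover have "(g - 1) * g < m * g"
      using m \<open>g > 0\<close> by simp
    ultimately show False
      using small by linarith
  qed
  then show ?thesis
    using subfamily by blast
qed

lemma card_edges_within_le:
  assumes G: "simple_graph G" and "C \<subseteq> verts G"
    and degree: "\<And>u. u \<in> verts G \<Longrightarrow> card (neighbours G u) \<le> \<Delta>"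
  shows "card {e \<in> edges G. e \<subseteq> C} \<le> card C * \<Delta>"
proof -
  have finite_C: "finite C"
    using G \<open>C \<subseteq> verts G\<close> finite_verts finite_subset by blast
  have finite_neighbours: "finite (neighbours G u)" for u
    using G finite_verts neighbours_subset_verts finite_subset by metis
  have "{e \<in> edges G. e \<subseteq> C} \<subseteq> (\<lambda>(u, w). {u, w}) ` (SIGMA u:C. neighbours G u)"
  proof
    fix e assume e: "e \<in> {e \<in> edges G. e \<subseteq> C}"
    then obtain u w where "e = {u, w}"
      using G unfolding simple_graph_def by blast
    with e show "e \<in> (\<lambda>(u, w). {u, w}) ` (SIGMA u:C. neighbours G u)"
      unfolding neighbours_def by force
  qed
  then have "card {e \<in> edges G. e \<subseteq> C} \<le> card (SIGMA u:C. neighbours G u)"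
    using finite_C finite_neighbours
    by (meson card_image_le card_mono finite_SigmaI finite_imageI le_trans)
  also have "\<dots> = (\<Sum>u\<in>C. card (neighbours G u))"
    using finite_C finite_neighbours by (simp add: card_SigmaI)
  also have "\<dots> \<le> card C * \<Delta>"
    using sum_bounded_above[of C "\<lambda>u. card (neighbours G u)" \<Delta>] degree \<open>C \<subseteq> verts G\<close> by auto
  finally show ?thesis .
qed

lemma card_le_if_induced_density_ge:
  fixes \<delta> :: real
  assumes G: "simple_graph G" and "C \<subseteq> verts G" and "\<delta> > 0"
    and degree: "\<And>u. u \<in> verts G \<Longrightarrow> card (neighbours G u) \<le> \<Delta>"
    and dense: "induced_density G C \<ge> \<delta>"
  shows "card C \<le> 1 + 2 * \<Delta> / \<delta>"
proof (cases "card C \<le> 1")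
  case True
  moreover have "0 \<le> 2 * \<Delta> / \<delta>"
    using \<open>\<delta> > 0\<close> by simp
  ultimately show ?thesis by linarith
next
  case False
  let ?c = "real (card C)"
  have pairs: "real (card C choose 2) = ?c * (?c - 1) / 2"
    using False by (simp add: choose_two field_char_0_class.of_nat_div mod_eq_0_iff_dvd of_nat_diff)
  have "\<delta> * (?c * (?c - 1) / 2) \<le> card {e \<in> edges G. e \<subseteq> C}"
    using dense False pairs unfolding induced_density_def by (simp add: pos_le_divide_eq)
  also have "\<dots> \<le> ?c * \<Delta>"
    using card_edges_within_le[OF G \<open>C \<subseteq> verts G\<close> degree] by (metis of_nat_mono of_nat_mult)
  finally have "?c * (\<delta> * (?c - 1)) \<le> ?c * (2 * \<Delta>)"
    by (simp add: field_simps)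
  then have "\<delta> * (?c - 1) \<le> 2 * \<Delta>"
    using False by simp
  then show ?thesis
    using \<open>\<delta> > 0\<close> by (simp add: field_simps)
qed

lemma finite_clustering: "simple_graph G \<Longrightarrow> clustering G \<C> \<Longrightarrow> finite \<C>"
  unfolding clustering_def using finite_verts
  by (metis Pow_iff finite_Pow_iff finite_subset subsetI)

lemma sum_card_clustering:
  assumes G: "simple_graph G" and "clustering G \<C>"
  shows "(\<Sum>C\<in>\<C>. card C) = card (verts G)"
proof -
  have "pairwise disjnt \<C>"
    using \<open>clustering G \<C>\<close> unfolding clustering_def pairwise_def disjnt_def by blast
  moreover have "\<Union>\<C> = verts G"
    using \<open>clustering G \<C>\<close> unfolding clustering_def by blast
  moreover have "\<forall>C\<in>\<C>. finite C"
    using \<open>clustering G \<C>\<close> G finite_verts finite_subset unfolding clustering_def by metis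
  ultimately show ?thesis
    using card_Union_disjoint by metis
qed

lemma card_verts_mult_le_card_maximal_cliques_mult:
  assumes G: "simple_graph G"
    and card_cliques: "\<And>D. D \<in> maximal_cliques G \<Longrightarrow> card D = s"
    and cliques_at: "\<And>u. u \<in> verts G \<Longrightarrow> r \<le> card {D \<in> maximal_cliques G. u \<in> D}"
  shows "card (verts G) * r \<le> card (maximal_cliques G) * s"
proof -
  have "card (verts G) * r \<le> (\<Sum>u\<in>verts G. card {D \<in> maximal_cliques G. u \<in> D})"
    using sum_bounded_below[of "verts G" r] cliques_at by (simp add: mult.commute)
  also have "\<dots> = (\<Sum>D\<in>maximal_cliques G. card {u \<in> verts G. u \<in> D})"
    using G finite_verts finite_maximal_cliques by (simp add: sum_multicount_gen)
  also have "\<dots> = card (maximal_cliques G) * s"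
  proof -
    have "{u \<in> verts G. u \<in> D} = D" if "D \<in> maximal_cliques G" for D
      using maximal_cliques_subset_verts[OF that] by blast
    then show ?thesis
      using card_cliques by simp
  qed
  finally show ?thesis .
qed

lemma card_cliques_covered_by_dense_set_le:
  fixes \<delta> \<gamma> :: real
  assumes G: "simple_graph G" and "s > 0"
    and card_cliques: "\<And>D. D \<in> maximal_cliques G \<Longrightarrow> card D = s"
    and cliques_Int: "\<And>D D'. D \<in> maximal_cliques G \<Longrightarrow> D' \<in> maximal_cliques G \<Longrightarrow> D \<noteq> D'
      \<Longrightarrow> card (D \<inter> D') \<le> 1"
    and degree: "\<And>u. u \<in> verts G \<Longrightarrow> card (neighbours G u) \<le> \<Delta>"
    and "\<delta> > 0" "\<gamma> > 0"
    and large: "1 + 2 * real \<Delta> / \<delta> < (\<gamma> * s - 1) * (\<gamma> * s) / 2"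
    and "C \<subseteq> verts G" and dense: "induced_density G C \<ge> \<delta>"
  shows "card {D \<in> maximal_cliques G. real (card (C \<inter> D)) \<ge> \<gamma> * real (card D)} * (\<gamma> * s)
    \<le> 2 * real (card C)"
proof (rule card_family_large_traces_le)
  show "finite C"
    using G \<open>C \<subseteq> verts G\<close> finite_verts finite_subset by blast
  have "card C \<le> 1 + 2 * real \<Delta> / \<delta>"
    using card_le_if_induced_density_ge[OF G \<open>C \<subseteq> verts G\<close> \<open>\<delta> > 0\<close> degree dense] .
  then show "card C < (\<gamma> * s - 1) * (\<gamma> * s) / 2"
    using large by linarith
  show "finite {D \<in> maximal_cliques G. real (card (C \<inter> D)) \<ge> \<gamma> * real (card D)}"
    using G finite_maximal_cliques by simp
  show "finite D" if "D \<in> {D \<in> maximal_cliques G. real (card (C \<inter> D)) \<ge> \<gamma> * real (card D)}" for D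
    using that finite_subset[OF maximal_cliques_subset_verts finite_verts[OF G]] by simp
  show "\<gamma> * s \<le> card (C \<inter> D)"
    if "D \<in> {D \<in> maximal_cliques G. real (card (C \<inter> D)) \<ge> \<gamma> * real (card D)}" for D
    using that card_cliques by force
qed (use \<open>\<gamma> > 0\<close> \<open>s > 0\<close> cliques_Int in simp_all)

lemma covered_fraction_le:
  fixes \<delta> \<gamma> :: real
  assumes G: "simple_graph G"
    and card_cliques: "\<And>D. D \<in> maximal_cliques G \<Longrightarrow> card D = s"
    and cliques_Int: "\<And>D D'. D \<in> maximal_cliques G \<Longrightarrow> D' \<in> maximal_cliques G \<Longrightarrow> D \<noteq> D'
      \<Longrightarrow> card (D \<inter> D') \<le> 1"
    and degree: "\<And>u. u \<in> verts G \<Longrightarrow> card (neighbours G u) \<le> \<Delta>"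
    and cliques_at: "\<And>u. u \<in> verts G \<Longrightarrow> r \<le> card {D \<in> maximal_cliques G. u \<in> D}"
    and "r > 0" "\<delta> > 0" "\<gamma> > 0"
    and large: "1 + 2 * real \<Delta> / \<delta> < (\<gamma> * s - 1) * (\<gamma> * s) / 2"
    and clustering: "clustering G \<C>" and dense: "\<forall>C\<in>\<C>. induced_density G C \<ge> \<delta>"
  shows "covered_fraction G \<C> \<gamma> \<le> 2 / (\<gamma> * r)"
proof -
  let ?M = "maximal_cliques G"
  define covered where "covered C = {D \<in> ?M. real (card (C \<inter> D)) \<ge> \<gamma> * real (card D)}" for C
  have "0 \<le> 2 * real \<Delta> / \<delta>"
    using \<open>\<delta> > 0\<close> by simp
  with large have "s > 0"
    by (cases "s = 0") auto
  have per_cluster: "card (covered C) * (\<gamma> * s) \<le> 2 * real (card C)" if "C \<in> \<C>" for C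
    unfolding covered_def
  proof (rule card_cliques_covered_by_dense_set_le[OF G \<open>s > 0\<close> card_cliques cliques_Int degree
        \<open>\<delta> > 0\<close> \<open>\<gamma> > 0\<close> large])
    show "C \<subseteq> verts G" "induced_density G C \<ge> \<delta>"
      using clustering dense that unfolding clustering_def by blast+
  qed
  let ?covered = "{D \<in> ?M. \<exists>C\<in>\<C>. real (card (C \<inter> D)) \<ge> \<gamma> * real (card D)}"
  have "?covered = (\<Union>C\<in>\<C>. covered C)"
    unfolding covered_def by blast
  then have "card ?covered \<le> (\<Sum>C\<in>\<C>. card (covered C))"
    using card_UN_le[OF finite_clustering[OF G clustering]] by simp
  then have "card ?covered * (\<gamma> * s) \<le> (\<Sum>C\<in>\<C>. card (covered C) * (\<gamma> * s))"
    using \<open>\<gamma> > 0\<close> by (simp add: mult_right_mono flip: of_nat_sum sum_distrib_right)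
  also have "\<dots> \<le> (\<Sum>C\<in>\<C>. 2 * real (card C))"
    using per_cluster by (rule sum_mono)
  also have "\<dots> = 2 * card (verts G)"
    using sum_card_clustering[OF G clustering] by (simp flip: sum_distrib_left of_nat_sum)
  finally have "card ?covered * (\<gamma> * r) * s \<le> 2 * (card (verts G) * r)"
    using \<open>r > 0\<close> by (simp add: algebra_simps mult_right_mono)
  also have "\<dots> \<le> 2 * (card ?M * s)"
    using card_verts_mult_le_card_maximal_cliques_mult[OF G card_cliques cliques_at] by (simp flip: of_nat_mult)
  finally have "card ?covered * (\<gamma> * r) \<le> 2 * card ?M"
    using \<open>s > 0\<close> by simp
  then show ?thesis
    using \<open>r > 0\<close> \<open>\<gamma> > 0\<close> unfolding covered_fraction_def
    by (cases "card ?M = 0") (simp_all add: field_simps)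
qed

definition hamming_words :: "nat \<Rightarrow> nat \<Rightarrow> nat list set" where
  "hamming_words k t = {xs. length xs = k \<and> set xs \<subseteq> {..<t}}"

definition hamming_adj :: "nat list \<Rightarrow> nat list \<Rightarrow> bool" where
  "hamming_adj x y \<longleftrightarrow> (\<exists>i<length x. y ! i \<noteq> x ! i \<and> y = x[i := y ! i])"

definition hamming_line :: "nat \<Rightarrow> nat list \<Rightarrow> nat \<Rightarrow> nat list set" where
  "hamming_line t x i = (\<lambda>a. x[i := a]) ` {..<t}"

definition hamming_graph :: "nat \<Rightarrow> nat \<Rightarrow> graph" where
  "hamming_graph k t = (to_nat ` hamming_words k t,
     {{to_nat x, to_nat y} | x y. x \<in> hamming_words k t \<and> y \<in> hamming_words k t \<and> hamming_adj x y})"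

lemma verts_hamming_graph: "verts (hamming_graph k t) = to_nat ` hamming_words k t"
  by (simp add: verts_def hamming_graph_def)

lemma edges_hamming_graph:
  "edges (hamming_graph k t) =
     {{to_nat x, to_nat y} | x y. x \<in> hamming_words k t \<and> y \<in> hamming_words k t \<and> hamming_adj x y}"
  by (simp add: edges_def hamming_graph_def)

lemma finite_hamming_words: "finite (hamming_words k t)"
  using finite_lists_length_eq[of "{..<t}" k] unfolding hamming_words_def by (simp add: conj_commute)

lemma length_hamming_word: "x \<in> hamming_words k t \<Longrightarrow> length x = k"
  by (simp add: hamming_words_def)

lemma nth_hamming_word_less: "x \<in> hamming_words k t \<Longrightarrow> i < k \<Longrightarrow> x ! i < t"
  unfolding hamming_words_def using nth_mem by fastforce

lemma replicate_zero_in_hamming_words: "1 \<le> t \<Longrightarrow> replicate k 0 \<in> hamming_words k t"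
  by (simp add: hamming_words_def set_replicate_conv_if)

lemma hamming_adj_sym: "hamming_adj x y \<Longrightarrow> hamming_adj y x"
  unfolding hamming_adj_def by (metis length_list_update list_update_id list_update_overwrite)

lemma edge_hamming_graph_iff:
  assumes "x \<in> hamming_words k t" "y \<in> hamming_words k t"
  shows "{to_nat x, to_nat y} \<in> edges (hamming_graph k t) \<longleftrightarrow> hamming_adj x y"
  using assms hamming_adj_sym unfolding edges_hamming_graph by (auto simp: doubleton_eq_iff)

lemma simple_graph_hamming_graph: "simple_graph (hamming_graph k t)"
  unfolding simple_graph_def
proof (intro conjI ballI)
  show "finite (verts (hamming_graph k t))"
    by (simp add: verts_hamming_graph finite_hamming_words)
  fix e assume "e \<in> edges (hamming_graph k t)"
  then obtain x y where "e = {to_nat x, to_nat y}" "x \<in> hamming_words k t" "y \<in> hamming_words k t"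
    and "hamming_adj x y"
    unfolding edges_hamming_graph by blast
  moreover from \<open>hamming_adj x y\<close> have "x \<noteq> y"
    unfolding hamming_adj_def by blast
  ultimately show "\<exists>u v. u \<noteq> v \<and> e = {u, v} \<and> u \<in> verts (hamming_graph k t) \<and> v \<in> verts (hamming_graph k t)"
    unfolding verts_hamming_graph by (intro exI[of _ "to_nat x"] exI[of _ "to_nat y"]) auto
qed

lemma mem_hamming_line:
  "i < length x \<Longrightarrow> z \<in> hamming_line t x i \<longleftrightarrow> z = x[i := z ! i] \<and> z ! i < t"
  unfolding hamming_line_def by auto

lemma hamming_line_subset: "x \<in> hamming_words k t \<Longrightarrow> hamming_line t x i \<subseteq> hamming_words k t"
  unfolding hamming_line_def hamming_words_def using set_update_subset_insert by fastforce

lemma self_in_hamming_line: "x \<in> hamming_words k t \<Longrightarrow> i < k \<Longrightarrow> x \<in> hamming_line t x i"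
  using mem_hamming_line length_hamming_word nth_hamming_word_less by simp

lemma hamming_line_update: "i < length x \<Longrightarrow> hamming_line t (x[i := a]) i = hamming_line t x i"
  unfolding hamming_line_def by simp

lemma card_hamming_line:
  assumes "i < length x"
  shows "card (hamming_line t x i) = t"
proof -
  have "inj_on (\<lambda>a. x[i := a]) {..<t}"
    by (rule inj_onI) (metis assms nth_list_update_eq)
  then show ?thesis
    unfolding hamming_line_def by (simp add: card_image)
qed

lemma hamming_adj_in_line:
  "i < length x \<Longrightarrow> u \<in> hamming_line t x i \<Longrightarrow> v \<in> hamming_line t x i \<Longrightarrow> u \<noteq> v
    \<Longrightarrow> hamming_adj u v"
  unfolding hamming_line_def hamming_adj_def by force

lemma hamming_adj_common_neighbour:
  assumes i: "i < length x" "y ! i \<noteq> x ! i" "y = x[i := y ! i]"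
    and "hamming_adj x z" "hamming_adj y z"
  shows "z = x[i := z ! i]"
proof -
  obtain j where j: "j < length x" "z ! j \<noteq> x ! j" "z = x[j := z ! j]"
    using \<open>hamming_adj x z\<close> unfolding hamming_adj_def by blast
  obtain l where l: "z ! l \<noteq> y ! l" "z = y[l := z ! l]"
    using \<open>hamming_adj y z\<close> unfolding hamming_adj_def by blast
  have "j = i"
  proof (rule ccontr)
    assume "j \<noteq> i"
    then have "z ! i = x ! i" "y ! j = x ! j"
      using i j by (metis nth_list_update_neq)+
    then have "l = i" "l = j"
      using i(2) j(2) l by (metis nth_list_update_neq)+
    with \<open>j \<noteq> i\<close> show False by simp
  qed
  with j show ?thesis by simp
qed

lemma clique_subset_hamming_line:
  assumes clique: "is_clique (hamming_graph k t) D"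
    and x: "x \<in> hamming_words k t" "to_nat x \<in> D" and y: "y \<in> hamming_words k t" "to_nat y \<in> D"
    and i: "i < length x" "y ! i \<noteq> x ! i" "y = x[i := y ! i]"
  shows "D \<subseteq> to_nat ` hamming_line t x i"
proof
  fix w assume "w \<in> D"
  then obtain z where z: "z \<in> hamming_words k t" "w = to_nat z"
    using clique unfolding is_clique_def verts_hamming_graph by blast
  have "z = x[i := z ! i]"
  proof (cases "z = x \<or> z = y")
    case True
    with i show ?thesis by auto
  next
    case False
    then have "{to_nat x, to_nat z} \<in> edges (hamming_graph k t)" "{to_nat y, to_nat z} \<in> edges (hamming_graph k t)"
      using clique x y \<open>w \<in> D\<close> z(2) unfolding is_clique_def by auto
    then have "hamming_adj x z" "hamming_adj y z"
      using edge_hamming_graph_iff x(1) y(1) z(1) by blast+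
    then show ?thesis
      using hamming_adj_common_neighbour[OF i] by blast
  qed
  moreover have "z ! i < t"
    using nth_hamming_word_less z(1) x(1) i(1) length_hamming_word by blast
  ultimately show "w \<in> to_nat ` hamming_line t x i"
    using z(2) mem_hamming_line[OF i(1)] by blast
qed

lemma is_clique_hamming_line:
  assumes x: "x \<in> hamming_words k t" and "i < k"
  shows "is_clique (hamming_graph k t) (to_nat ` hamming_line t x i)"
  unfolding is_clique_def
proof (intro conjI ballI impI)
  show "to_nat ` hamming_line t x i \<subseteq> verts (hamming_graph k t)"
    unfolding verts_hamming_graph using hamming_line_subset[OF x] by blast
  fix u v assume "u \<in> to_nat ` hamming_line t x i" "v \<in> to_nat ` hamming_line t x i" "u \<noteq> v"
  then obtain a b where "a \<in> hamming_line t x i" "b \<in> hamming_line t x i" "a \<noteq> b" "u = to_nat a" "v = to_nat b"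
    by blast
  moreover have "i < length x"
    using x \<open>i < k\<close> length_hamming_word by simp
  ultimately show "{u, v} \<in> edges (hamming_graph k t)"
    using hamming_adj_in_line edge_hamming_graph_iff hamming_line_subset[OF x] by blast
qed

lemma ex_other_less:
  assumes "2 \<le> t"
  shows "\<exists>a<t. a \<noteq> (b::nat)"
proof (cases "b = 0")
  case True
  with assms show ?thesis by (intro exI[of _ 1]) auto
next
  case False
  with assms show ?thesis by (intro exI[of _ 0]) auto
qed

lemma clique_subset_some_hamming_line:
  assumes "1 \<le> k" "1 \<le> t" and clique: "is_clique (hamming_graph k t) D"
  shows "\<exists>x\<in>hamming_words k t. \<exists>i<k. D \<subseteq> to_nat ` hamming_line t x i"
proof (cases "\<exists>u w. u \<in> D \<and> w \<in> D \<and> u \<noteq> w")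
  case True
  then obtain x y where x: "x \<in> hamming_words k t" "to_nat x \<in> D"
    and y: "y \<in> hamming_words k t" "to_nat y \<in> D" and "x \<noteq> y"
    using clique unfolding is_clique_def verts_hamming_graph by blast
  then have "{to_nat x, to_nat y} \<in> edges (hamming_graph k t)"
    using clique unfolding is_clique_def by simp
  then have "hamming_adj x y"
    using edge_hamming_graph_iff x(1) y(1) by blast
  then obtain i where i: "i < length x" "y ! i \<noteq> x ! i" "y = x[i := y ! i]"
    unfolding hamming_adj_def by blast
  then show ?thesis
    using clique_subset_hamming_line[OF clique x y i] x(1) length_hamming_word by auto
next
  case False
  show ?thesis
  proof (cases "D = {}")
    case True
    have "replicate k 0 \<in> hamming_words k t"
      using replicate_zero_in_hamming_words \<open>1 \<le> t\<close> .
    with True \<open>1 \<le> k\<close> show ?thesis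
      by (intro bexI[of _ "replicate k 0"] exI[of _ 0]) auto
  next
    case False
    then obtain x where x: "x \<in> hamming_words k t" "D \<subseteq> {to_nat x}"
      using \<open>\<not> (\<exists>u w. _)\<close> clique unfolding is_clique_def verts_hamming_graph by blast
    moreover have "x \<in> hamming_line t x 0"
      using self_in_hamming_line[OF x(1)] \<open>1 \<le> k\<close> by simp
    ultimately show ?thesis
      using \<open>1 \<le> k\<close> by (intro bexI[of _ x] exI[of _ 0]) auto
  qed
qed

lemma maximal_clique_hamming_line:
  assumes "2 \<le> t" and x: "x \<in> hamming_words k t" and "i < k"
  shows "maximal_clique (hamming_graph k t) (to_nat ` hamming_line t x i)"
  unfolding maximal_clique_def
proof (intro conjI allI impI)
  show "is_clique (hamming_graph k t) (to_nat ` hamming_line t x i)"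
    using is_clique_hamming_line[OF x \<open>i < k\<close>] .
  fix D' assume D': "is_clique (hamming_graph k t) D' \<and> to_nat ` hamming_line t x i \<subseteq> D'"
  obtain a where "a < t" "a \<noteq> x ! i"
    using ex_other_less[OF \<open>2 \<le> t\<close>] by blast
  have "i < length x"
    using x \<open>i < k\<close> length_hamming_word by simp
  then have "x \<in> hamming_line t x i" "x[i := a] \<in> hamming_line t x i"
    using self_in_hamming_line[OF x \<open>i < k\<close>] mem_hamming_line \<open>a < t\<close> by auto
  then have "D' \<subseteq> to_nat ` hamming_line t x i"
    using D' hamming_line_subset[OF x] \<open>i < length x\<close> \<open>a \<noteq> x ! i\<close>
    by (intro clique_subset_hamming_line[of k t D' x "x[i := a]" i]) auto
  with D' show "D' = to_nat ` hamming_line t x i" by blast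
qed

lemma maximal_clique_hamming_graph_iff:
  assumes "1 \<le> k" "2 \<le> t"
  shows "maximal_clique (hamming_graph k t) D \<longleftrightarrow>
    (\<exists>x\<in>hamming_words k t. \<exists>i<k. D = to_nat ` hamming_line t x i)"
proof
  assume max: "maximal_clique (hamming_graph k t) D"
  then obtain x i where "x \<in> hamming_words k t" "i < k" "D \<subseteq> to_nat ` hamming_line t x i"
    using clique_subset_some_hamming_line[of k t D] assms unfolding maximal_clique_def by auto
  with max show "\<exists>x\<in>hamming_words k t. \<exists>i<k. D = to_nat ` hamming_line t x i"
    using is_clique_hamming_line unfolding maximal_clique_def by blast
next
  assume "\<exists>x\<in>hamming_words k t. \<exists>i<k. D = to_nat ` hamming_line t x i"
  then show "maximal_clique (hamming_graph k t) D"
    using maximal_clique_hamming_line \<open>2 \<le> t\<close> by blast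
qed

lemma card_maximal_clique_hamming_graph:
  assumes "1 \<le> k" "2 \<le> t" "D \<in> maximal_cliques (hamming_graph k t)"
  shows "card D = t"
proof -
  obtain x i where "x \<in> hamming_words k t" "i < k" "D = to_nat ` hamming_line t x i"
    using assms maximal_clique_hamming_graph_iff unfolding maximal_cliques_def by auto
  then show ?thesis
    using card_hamming_line length_hamming_word by (simp add: card_image)
qed

lemma card_Int_maximal_cliques_hamming_graph:
  assumes "1 \<le> k" "2 \<le> t"
    and D1: "D1 \<in> maximal_cliques (hamming_graph k t)" and D2: "D2 \<in> maximal_cliques (hamming_graph k t)"
    and "D1 \<noteq> D2"
  shows "card (D1 \<inter> D2) \<le> 1"
proof -
  obtain x i where x: "x \<in> hamming_words k t" "i < k" and D1_eq: "D1 = to_nat ` hamming_line t x i"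
    using assms maximal_clique_hamming_graph_iff unfolding maximal_cliques_def by auto
  have "i < length x"
    using x length_hamming_word by simp
  have "u = v" if uv: "u \<in> D1 \<inter> D2" "v \<in> D1 \<inter> D2" for u v
  proof (rule ccontr)
    assume "u \<noteq> v"
    obtain a b where "u = to_nat (x[i := a])" "v = to_nat (x[i := b])"
      "x[i := a] \<in> hamming_line t x i" "x[i := b] \<in> hamming_line t x i"
      using uv D1_eq unfolding hamming_line_def by blast
    moreover have "a \<noteq> b"
      using calculation \<open>u \<noteq> v\<close> by blast
    moreover have "is_clique (hamming_graph k t) D2"
      using D2 unfolding maximal_cliques_def maximal_clique_def by simp
    ultimately have "D2 \<subseteq> to_nat ` hamming_line t (x[i := a]) i"
      using uv hamming_line_subset[OF x(1)] \<open>i < length x\<close>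
      by (intro clique_subset_hamming_line[of k t D2 "x[i := a]" "x[i := b]" i]) auto
    then have "D2 \<subseteq> D1"
      using hamming_line_update[OF \<open>i < length x\<close>] D1_eq by simp
    then have "D1 = D2"
      using D1 D2 unfolding maximal_cliques_def maximal_clique_def by blast
    with \<open>D1 \<noteq> D2\<close> show False ..
  qed
  moreover have "finite (D1 \<inter> D2)"
    using D1_eq unfolding hamming_line_def by simp
  ultimately show ?thesis
    unfolding One_nat_def by (subst card_le_Suc0_iff_eq) blast+
qed

lemma card_neighbours_hamming_graph_le:
  assumes "u \<in> verts (hamming_graph k t)"
  shows "card (neighbours (hamming_graph k t) u) \<le> k * t"
proof -
  obtain x where x: "x \<in> hamming_words k t" "u = to_nat x"
    using assms unfolding verts_hamming_graph by blast
  have "neighbours (hamming_graph k t) u \<subseteq> to_nat ` (\<Union>i<k. hamming_line t x i)"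
  proof
    fix w assume w: "w \<in> neighbours (hamming_graph k t) u"
    then obtain y where y: "y \<in> hamming_words k t" "w = to_nat y"
      using neighbours_subset_verts[OF simple_graph_hamming_graph] unfolding verts_hamming_graph by blast
    then have "{to_nat x, to_nat y} \<in> edges (hamming_graph k t)"
      using w x(2) unfolding neighbours_def by simp
    then have "hamming_adj x y"
      using edge_hamming_graph_iff[OF x(1) y(1)] by simp
    then obtain i where i: "i < length x" "y = x[i := y ! i]"
      unfolding hamming_adj_def by blast
    then have "i < k"
      using length_hamming_word[OF x(1)] by simp
    then have "y \<in> hamming_line t x i"
      using mem_hamming_line[OF i(1)] i(2) nth_hamming_word_less[OF y(1)] by simp
    with \<open>i < k\<close> y(2) show "w \<in> to_nat ` (\<Union>i<k. hamming_line t x i)"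
      by blast
  qed
  then have "card (neighbours (hamming_graph k t) u) \<le> card (to_nat ` (\<Union>i<k. hamming_line t x i))"
    by (rule card_mono[rotated]) (simp add: hamming_line_def)
  also have "\<dots> \<le> (\<Sum>i<k. card (hamming_line t x i))"
    by (simp add: card_image card_UN_le)
  also have "\<dots> = k * t"
    using card_hamming_line length_hamming_word[OF x(1)] by simp
  finally show ?thesis .
qed

lemma card_maximal_cliques_at_hamming_graph:
  assumes "2 \<le> t" "u \<in> verts (hamming_graph k t)"
  shows "k \<le> card {D \<in> maximal_cliques (hamming_graph k t). u \<in> D}"
proof -
  obtain x where x: "x \<in> hamming_words k t" "u = to_nat x"
    using assms unfolding verts_hamming_graph by blast
  let ?line = "\<lambda>i. to_nat ` hamming_line t x i"
  have "?line ` {..<k} \<subseteq> {D \<in> maximal_cliques (hamming_graph k t). u \<in> D}"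
    using maximal_clique_hamming_line[OF \<open>2 \<le> t\<close> x(1)] self_in_hamming_line[OF x(1)] x(2)
    unfolding maximal_cliques_def by auto
  moreover have "inj_on ?line {..<k}"
  proof (rule inj_onI)
    fix i j assume "i \<in> {..<k}" "j \<in> {..<k}" "?line i = ?line j"
    then have "i < length x" and lines: "hamming_line t x i = hamming_line t x j"
      using x(1) length_hamming_word by (auto simp: inj_image_eq_iff)
    obtain a where "a < t" "a \<noteq> x ! i"
      using ex_other_less[OF \<open>2 \<le> t\<close>] by blast
    then have "x[i := a] \<in> hamming_line t x j"
      using lines unfolding hamming_line_def by blast
    then obtain c where "x[i := a] = x[j := c]"
      unfolding hamming_line_def by blast
    then show "i = j"
      using \<open>i < length x\<close> \<open>a \<noteq> x ! i\<close> by (metis nth_list_update_eq nth_list_update_neq)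
  qed
  ultimately have "card {..<k} \<le> card {D \<in> maximal_cliques (hamming_graph k t). u \<in> D}"
    using finite_maximal_cliques[OF simple_graph_hamming_graph] by (intro card_inj_on_le) auto
  then show ?thesis
    by simp
qed

lemma covered_fraction_hamming_graph_le:
  fixes \<delta> \<gamma> :: real
  assumes "1 \<le> k" "2 \<le> t" "\<delta> > 0" "\<gamma> > 0"
    and "1 + 2 * real (k * t) / \<delta> < (\<gamma> * t - 1) * (\<gamma> * t) / 2"
    and "clustering (hamming_graph k t) \<C>" "\<forall>C\<in>\<C>. induced_density (hamming_graph k t) C \<ge> \<delta>"
  shows "covered_fraction (hamming_graph k t) \<C> \<gamma> \<le> 2 / (\<gamma> * k)"
  by (rule covered_fraction_le[OF simple_graph_hamming_graph
        card_maximal_clique_hamming_graph[OF assms(1,2)] card_Int_maximal_cliques_hamming_graph[OF assms(1,2)]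
        card_neighbours_hamming_graph_le card_maximal_cliques_at_hamming_graph[OF assms(2)]])
    (use assms in simp_all)

theorem theorem4p2:
  shows "\<exists>(N0::nat) (G::nat \<Rightarrow> graph).
     (\<forall>n\<ge>N0. simple_graph (G n) \<and> verts (G n) \<noteq> {}) \<and>
     (\<forall>\<delta>::real. \<forall>\<gamma>::real. \<forall>\<C>::nat \<Rightarrow> nat set set.
        \<delta> > 0 \<longrightarrow> \<gamma> > 0 \<longrightarrow>
        (\<forall>n\<ge>N0. clustering (G n) (\<C> n) \<and> (\<forall>C\<in>\<C> n. induced_density (G n) C \<ge> \<delta>)) \<longrightarrow>
        (\<lambda>n. covered_fraction (G n) (\<C> n) \<gamma>) \<longlonglongrightarrow> 0)"
proof (intro exI[of _ 2] exI[of _ "\<lambda>n. hamming_graph n (n^2)"] conjI allI impI)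
  fix n :: nat assume "2 \<le> n"
  then have "replicate n 0 \<in> hamming_words n (n^2)"
    by (intro replicate_zero_in_hamming_words) simp
  then show "verts (hamming_graph n (n^2)) \<noteq> {}"
    unfolding verts_hamming_graph by blast
  show "simple_graph (hamming_graph n (n^2))"
    by (rule simple_graph_hamming_graph)
next
  fix \<delta> \<gamma> :: real and \<C> :: "nat \<Rightarrow> nat set set"
  assume "\<delta> > 0" "\<gamma> > 0" and clusters: "\<forall>n\<ge>2. clustering (hamming_graph n (n^2)) (\<C> n) \<and>
    (\<forall>C\<in>\<C> n. induced_density (hamming_graph n (n^2)) C \<ge> \<delta>)"
  have "eventually (\<lambda>n. 1 + 2 * real (n * n^2) / \<delta> < (\<gamma> * real (n^2) - 1) * (\<gamma> * real (n^2)) / 2)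
      sequentially"
    using \<open>\<delta> > 0\<close> \<open>\<gamma> > 0\<close> by real_asymp
  with eventually_ge_at_top[of 2]
  have upper: "eventually (\<lambda>n. covered_fraction (hamming_graph n (n^2)) (\<C> n) \<gamma> \<le> 2 / (\<gamma> * n))
      sequentially"
  proof eventually_elim
    case (elim n)
    then have "1 \<le> n" "2 \<le> n^2"
      by (simp_all add: power2_eq_square) (metis le_square le_trans)
    moreover have "clustering (hamming_graph n (n^2)) (\<C> n)"
      "\<forall>C\<in>\<C> n. induced_density (hamming_graph n (n^2)) C \<ge> \<delta>"
      using clusters elim(1) by blast+
    ultimately show ?case
      using covered_fraction_hamming_graph_le \<open>\<delta> > 0\<close> \<open>\<gamma> > 0\<close> elim(2) by blast
  qed
  have lower: "eventually (\<lambda>n. 0 \<le> covered_fraction (hamming_graph n (n^2)) (\<C> n) \<gamma>) sequentially"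
    by (simp add: covered_fraction_def)
  have "(\<lambda>n. 2 / (\<gamma> * real n)) \<longlonglongrightarrow> 0"
    using \<open>\<gamma> > 0\<close> by real_asymp
  then show "(\<lambda>n. covered_fraction (hamming_graph n (n^2)) (\<C> n) \<gamma>) \<longlonglongrightarrow> 0"
    by (rule tendsto_sandwich[OF lower upper tendsto_const])
qed

end
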